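(* Assume the standing setting below and the structural assumption (H) below (with compact set $K\subset\Sigma$). Let $u$ be the solution of (E) and $c$ the ergodic constant. Then for every $x_0\in K$, the function $t\mapsto u(x_0,t)+ct$ is nonincreasing on $[0,\infty)$.
   Context: Standing setting. $\mathbb T^N=\mathbb R^N/\mathbb Z^N$ is the flat torus, $\Theta$ is a metric space and $C>0$ is a fixed constant. For every $\theta\in\Theta$: $\sigma_\theta\in W^{1,\infty}(\mathbb T^N;\mathcal M_N)$ with $|\sigma_\theta|,|D\sigma_\theta|\le C$, and $A_\theta=\sigma_\theta\sigma_\theta^T$; $H_\theta\in W^{1,\infty}_{\rm loc}(\mathbb T^N\times\mathbb R^N)$ with $|H_\theta(x,0)|\le C$, and for every $R>0$ there is $C_R>0$ independent of $\theta$ with $|H_\theta(x,p)-H_\theta(y,q)|\le C_R(|x-y|+|p-q|)$ for $|p|,|q|\le R$. (E): $u_t+\sup_{\theta}\{-\mathrm{tr}(A_\theta(x)D^2u)+H_\theta(x,Du)\}=0$ in $\mathbb T^N\times(0,\infty)$, $u(x,0)=u_0(x)$; (E$_\lambda$): $\lambda v_\lambda+\sup_{\theta}\{-\mathrm{tr}(A_\theta D^2v_\lambda)+H_\theta(x,Dv_\lambda)\}=0$; (S): $\sup_{\theta}\{-\mathrm{tr}(A_\theta(x)D^2v)+H_\theta(x,Dv)\}=c$. It is assumed that there exist viscosity solutions $u$ of (E) and $v_\lambda$ of (E$_\lambda$) ($\lambda>0$), $C$-Lipschitz in $x$ uniformly in $t,\lambda$; then comparison holds, there is a unique $c\in\mathbb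 R$ (ergodic constant) for which (S) has a Lipschitz solution, and $u+ct$ is bounded. $\Sigma:=\{x:A_\theta(x)=0\ \forall\theta\}$. Assumption (H): there is $\mu_0>1$ with $H_\theta(x,\mu p)-\mu H_\theta(x,p)\ge(1-\mu)c$ for all $(x,p)$, $\theta$, $1<\mu<\mu_0$; and there is a compact $K\subset\Sigma$ with $H_\theta(x,p)\ge c$ for all $(x,p)\in K\times\mathbb R^N$, $\theta\in\Theta$, and $\inf_\theta\{H_\theta(x,\mu p)-\mu H_\theta(x,p)\}>(1-\mu)c$ for all $x\in\Sigma$ with $\operatorname{dist}(x,K)\ne0$, $p\ne0$, $1<\mu\le\mu_0$. *)

theory Defs
  imports "HOL-Analysis.Analysis"
begin

text \<open>The flat torus is represented by Z^N-periodic objects on R^N = real^'n.\<close>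

definition int_shift :: "int^'n \<Rightarrow> real^'n" where
  "int_shift k = (\<chi> i. real_of_int (k $ i))"

definition periodic_fun :: "(real^'n \<Rightarrow> 'b) \<Rightarrow> bool" where
  "periodic_fun f \<longleftrightarrow> (\<forall>x k. f (x + int_shift k) = f x)"

definition periodic_set :: "(real^'n) set \<Rightarrow> bool" where
  "periodic_set S \<longleftrightarrow> (\<forall>x k. x \<in> S \<longleftrightarrow> x + int_shift k \<in> S)"

definition diffA :: "('th \<Rightarrow> real^'n \<Rightarrow> real^'n^'n) \<Rightarrow> 'th \<Rightarrow> real^'n \<Rightarrow> real^'n^'n" where
  "diffA \<sigma> \<theta> x = \<sigma> \<theta> x ** transpose (\<sigma> \<theta> x)"

definition degen_set :: "('th \<Rightarrow> real^'n \<Rightarrow> real^'n^'n) \<Rightarrow> (real^'n) set" where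
  "degen_set \<sigma> = {x. \<forall>\<theta>. diffA \<sigma> \<theta> x = 0}"

definition bellmanF ::
  "('th \<Rightarrow> real^'n \<Rightarrow> real^'n^'n) \<Rightarrow> ('th \<Rightarrow> real^'n \<Rightarrow> real^'n \<Rightarrow> real)
    \<Rightarrow> real^'n \<Rightarrow> real^'n \<Rightarrow> real^'n^'n \<Rightarrow> real" where
  "bellmanF \<sigma> H x p X = (SUP \<theta>. - trace (diffA \<sigma> \<theta> x ** X) + H \<theta> x p)"

definition test_fun_xt ::
  "(real^'n \<Rightarrow> real \<Rightarrow> real) \<Rightarrow> (real^'n \<Rightarrow> real \<Rightarrow> real) \<Rightarrow> (real^'n \<Rightarrow> real \<Rightarrow> real^'n)
    \<Rightarrow> (real^'n \<Rightarrow> real \<Rightarrow> real^'n^'n) \<Rightarrow> bool" where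
  "test_fun_xt \<phi> \<phi>t D\<phi> D2\<phi> \<longleftrightarrow>
     (\<forall>x t. ((\<lambda>s. \<phi> x s) has_real_derivative \<phi>t x t) (at t)) \<and>
     (\<forall>x t. ((\<lambda>y. \<phi> y t) has_derivative (\<lambda>h. D\<phi> x t \<bullet> h)) (at x)) \<and>
     (\<forall>x t. ((\<lambda>y. D\<phi> y t) has_derivative (\<lambda>h. D2\<phi> x t *v h)) (at x)) \<and>
     continuous_on UNIV (\<lambda>z. \<phi>t (fst z) (snd z)) \<and>
     continuous_on UNIV (\<lambda>z. D\<phi> (fst z) (snd z)) \<and>
     continuous_on UNIV (\<lambda>z. D2\<phi> (fst z) (snd z))"

definition test_fun_x ::
  "(real^'n \<Rightarrow> real) \<Rightarrow> (real^'n \<Rightarrow> real^'n) \<Rightarrow> (real^'n \<Rightarrow> real^'n^'n) \<Rightarrow> bool" where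
  "test_fun_x \<psi> D\<psi> D2\<psi> \<longleftrightarrow>
     (\<forall>x. (\<psi> has_derivative (\<lambda>h. D\<psi> x \<bullet> h)) (at x)) \<and>
     (\<forall>x. (D\<psi> has_derivative (\<lambda>h. D2\<psi> x *v h)) (at x)) \<and>
     continuous_on UNIV D2\<psi>"

definition visc_sol_evol ::
  "(real^'n \<Rightarrow> real^'n \<Rightarrow> real^'n^'n \<Rightarrow> real) \<Rightarrow> (real^'n \<Rightarrow> real)
    \<Rightarrow> (real^'n \<Rightarrow> real \<Rightarrow> real) \<Rightarrow> bool" where
  "visc_sol_evol F u0 u \<longleftrightarrow>
     continuous_on {z. snd z \<ge> 0} (\<lambda>z. u (fst z) (snd z)) \<and>
     (\<forall>x. u x 0 = u0 x) \<and>
     (\<forall>\<phi> \<phi>t D\<phi> D2\<phi> x0 t0. test_fun_xt \<phi> \<phi>t D\<phi> D2\<phi> \<and> t0 > 0 \<and>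
        (\<exists>e>0. \<forall>y s. norm (y - x0) < e \<and> \<bar>s - t0\<bar> < e \<longrightarrow>
                u y s - \<phi> y s \<le> u x0 t0 - \<phi> x0 t0)
        \<longrightarrow> \<phi>t x0 t0 + F x0 (D\<phi> x0 t0) (D2\<phi> x0 t0) \<le> 0) \<and>
     (\<forall>\<phi> \<phi>t D\<phi> D2\<phi> x0 t0. test_fun_xt \<phi> \<phi>t D\<phi> D2\<phi> \<and> t0 > 0 \<and>
        (\<exists>e>0. \<forall>y s. norm (y - x0) < e \<and> \<bar>s - t0\<bar> < e \<longrightarrow>
                u y s - \<phi> y s \<ge> u x0 t0 - \<phi> x0 t0)
        \<longrightarrow> \<phi>t x0 t0 + F x0 (D\<phi> x0 t0) (D2\<phi> x0 t0) \<ge> 0)"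

definition visc_sol_stat ::
  "(real^'n \<Rightarrow> real \<Rightarrow> real^'n \<Rightarrow> real^'n^'n \<Rightarrow> real) \<Rightarrow> (real^'n \<Rightarrow> real) \<Rightarrow> bool" where
  "visc_sol_stat G v \<longleftrightarrow>
     continuous_on UNIV v \<and>
     (\<forall>\<psi> D\<psi> D2\<psi> x0. test_fun_x \<psi> D\<psi> D2\<psi> \<and>
        (\<exists>e>0. \<forall>y. norm (y - x0) < e \<longrightarrow> v y - \<psi> y \<le> v x0 - \<psi> x0)
        \<longrightarrow> G x0 (v x0) (D\<psi> x0) (D2\<psi> x0) \<le> 0) \<and>
     (\<forall>\<psi> D\<psi> D2\<psi> x0. test_fun_x \<psi> D\<psi> D2\<psi> \<and>
        (\<exists>e>0. \<forall>y. norm (y - x0) < e \<longrightarrow> v y - \<psi> y \<ge> v x0 - \<psi> x0)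
        \<longrightarrow> G x0 (v x0) (D\<psi> x0) (D2\<psi> x0) \<ge> 0)"

end

theory Submission
  imports Defs
begin

text \<open>
  Suppose w(t) = u(x0,t) + ct increased by \<delta> > 0 between times 0 < a < b. Maximise
  u(y,r) + cr - \<psi>(r) - |y - x0|^2/\<epsilon> over a compact neighbourhood, where \<psi> grows with slope at
  least \<kappa> = \<delta>/(2(b - a)) but so slowly on [a,b] and so fast afterwards that the maximum lies
  strictly inside the time interval; Lipschitz continuity of u puts the maximiser y within C\<epsilon>
  of x0. The subsolution inequality there reads \<psi>'(r) - c + F \<le> 0. Since every \<sigma> \<theta> vanishes at
  x0 \<in> \<Sigma>, the diffusion term is O(\<epsilon>), and H \<ge> c on K makes the Hamiltonian term at
  least c - O(\<epsilon>); hence \<kappa> \<le> O(\<epsilon>), which fails for small \<epsilon>. The case s = 0 follows by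
  continuity of u at t = 0.
\<close>

lemma trace_mult_transpose_self: "trace (A ** transpose A) = A \<bullet> (A::real^'n^'m)"
  by (simp add: trace_def inner_vec_def matrix_matrix_mult_def transpose_def)

lemma trace_mult_scaleR_mat_1: "trace ((A::real^'n^'n) ** (k *\<^sub>R mat 1)) = k * trace A"
  by (simp add: matrix_scalar_ac trace_def sum_distrib_left)

lemma trace_diffA_scaleR_mat_1:
  "trace (diffA \<sigma> \<theta> x ** (k *\<^sub>R mat 1)) = k * (norm (\<sigma> \<theta> x))\<^sup>2"
  by (simp add: diffA_def trace_mult_scaleR_mat_1 trace_mult_transpose_self power2_norm_eq_inner)

lemma degen_set_imp_sigma_eq_0:
  assumes "x \<in> degen_set \<sigma>"
  shows "\<sigma> \<theta> x = 0"
proof -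
  have "(norm (\<sigma> \<theta> x))\<^sup>2 = trace (diffA \<sigma> \<theta> x ** (1 *\<^sub>R mat 1))"
    by (simp only: trace_diffA_scaleR_mat_1)
  also have "\<dots> = 0"
    using assms by (simp add: degen_set_def trace_def)
  finally show ?thesis
    by simp
qed

lemma bellmanF_scaleR_mat_1_ge:
  assumes "bdd_above (range (\<lambda>\<theta>. H \<theta> x p))" and "k \<ge> 0"
  shows "H \<theta> x p - k * (norm (\<sigma> \<theta> x))\<^sup>2 \<le> bellmanF \<sigma> H x p (k *\<^sub>R mat 1)"
proof -
  have "bdd_above (range (\<lambda>\<theta>. - trace (diffA \<sigma> \<theta> x ** (k *\<^sub>R mat 1)) + H \<theta> x p))"
  proof -
    obtain B where "\<And>\<theta>. H \<theta> x p \<le> B"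
      using assms(1) by (auto simp: bdd_above_def)
    then show ?thesis
      using assms(2) by (intro bdd_aboveI2[of _ _ B])
        (smt (verit) trace_diffA_scaleR_mat_1 mult_nonneg_nonneg zero_le_power2)
  qed
  then have "- trace (diffA \<sigma> \<theta> x ** (k *\<^sub>R mat 1)) + H \<theta> x p \<le> bellmanF \<sigma> H x p (k *\<^sub>R mat 1)"
    unfolding bellmanF_def by (rule cSUP_upper[OF UNIV_I])
  then show ?thesis
    by (simp add: trace_diffA_scaleR_mat_1)
qed

lemma bellmanF_near_degen_set_ge:
  fixes \<sigma> :: "'th \<Rightarrow> real^'n \<Rightarrow> real^'n^'n"
  assumes "x0 \<in> degen_set \<sigma>" and "\<And>\<theta>. C-lipschitz_on UNIV (\<sigma> \<theta>)"
    and "dist x x0 \<le> r" and "k \<ge> 0"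
    and "bdd_above (range (\<lambda>\<theta>. H \<theta> x p))" and "\<And>\<theta>. h \<le> H \<theta> x p"
  shows "h - k * (C * r)\<^sup>2 \<le> bellmanF \<sigma> H x p (k *\<^sub>R mat 1)"
proof -
  define \<theta> where "\<theta> = (undefined :: 'th)"
  have "norm (\<sigma> \<theta> x) \<le> C * r"
  proof -
    have "norm (\<sigma> \<theta> x) \<le> C * dist x x0"
      using lipschitz_onD[OF assms(2), of x x0] by (simp add: degen_set_imp_sigma_eq_0[OF assms(1)])
    also have "\<dots> \<le> C * r"
      using assms(3) lipschitz_on_nonneg[OF assms(2)] by (simp add: mult_left_mono)
    finally show ?thesis .
  qed
  then have "k * (norm (\<sigma> \<theta> x))\<^sup>2 \<le> k * (C * r)\<^sup>2"
    using assms(4) by (intro mult_left_mono power_mono) auto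
  then show ?thesis
    using bellmanF_scaleR_mat_1_ge[where \<sigma> = \<sigma> and \<theta> = \<theta> and H = H and x = x and p = p, OF assms(5,4)]
      assms(6)[of \<theta>]
    by linarith
qed

lemma bellmanF_quadratic_penalty_ge:
  fixes \<sigma> :: "'th \<Rightarrow> real^'n \<Rightarrow> real^'n^'n"
  assumes x0: "x0 \<in> degen_set \<sigma>" and sigma_lip: "\<And>\<theta>. C-lipschitz_on UNIV (\<sigma> \<theta>)"
    and H_ge: "\<And>\<theta> p. c \<le> H \<theta> x0 p"
    and H_zero: "\<And>\<theta>. \<bar>H \<theta> y 0\<bar> \<le> B"
    and H_lip: "\<And>\<theta> x x' p q. norm p \<le> R \<Longrightarrow> norm q \<le> R \<Longrightarrow>
                  \<bar>H \<theta> x p - H \<theta> x' q\<bar> \<le> L * (norm (x - x') + norm (p - q))"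
    and R: "2 * C \<le> R" and L: "L \<ge> 0" and \<epsilon>: "\<epsilon> > 0" and y: "dist y x0 \<le> C * \<epsilon>"
  shows "c - L * C * \<epsilon> - 2 * C ^ 4 * \<epsilon> \<le> bellmanF \<sigma> H y ((2 / \<epsilon>) *\<^sub>R (y - x0)) ((2 / \<epsilon>) *\<^sub>R mat 1)"
proof -
  define p where "p = (2 / \<epsilon>) *\<^sub>R (y - x0)"
  have "norm p = 2 * dist y x0 / \<epsilon>"
    using \<epsilon> by (simp add: p_def dist_norm)
  also have "\<dots> \<le> 2 * C"
    using \<epsilon> y by (simp add: field_simps)
  finally have p: "norm p \<le> R"
    using R by linarith
  have "R \<ge> 0"
    using R lipschitz_on_nonneg[OF sigma_lip] by linarith
  have "bdd_above (range (\<lambda>\<theta>. H \<theta> y p))"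
  proof (rule bdd_aboveI2)
    fix \<theta>
    show "H \<theta> y p \<le> B + L * R"
      using H_lip[of p 0 \<theta> y y] p \<open>R \<ge> 0\<close> H_zero[of \<theta>] L
      by simp (smt (verit) mult_left_mono)
  qed
  moreover have "c - L * (C * \<epsilon>) \<le> H \<theta> y p" for \<theta>
  proof -
    have "H \<theta> x0 p - H \<theta> y p \<le> L * dist y x0"
      using H_lip[of p p \<theta> x0 y] p by (simp add: dist_norm norm_minus_commute)
    then show ?thesis
      using H_ge[of \<theta> p] mult_left_mono[OF y L] by linarith
  qed
  ultimately have "c - L * (C * \<epsilon>) - (2 / \<epsilon>) * (C * (C * \<epsilon>))\<^sup>2 \<le> bellmanF \<sigma> H y p ((2 / \<epsilon>) *\<^sub>R mat 1)"
    using \<epsilon> by (intro bellmanF_near_degen_set_ge[OF x0 sigma_lip y]) auto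
  then show ?thesis
    using \<epsilon> by (simp add: p_def power2_eq_square power4_eq_xxxx field_simps)
qed

lemma lipschitz_minus_quadratic_le:
  fixes f :: "'a::metric_space \<Rightarrow> real"
  assumes "C-lipschitz_on UNIV f" and "\<epsilon> > 0"
  shows "f y - (dist y x0)\<^sup>2 / \<epsilon> \<le> f x0 + C\<^sup>2 * \<epsilon> / 4"
proof -
  have "f y \<le> f x0 + C * dist y x0"
    using lipschitz_onD[OF assms(1), of y x0] by (simp add: dist_real_def)
  moreover have "C * dist y x0 - (dist y x0)\<^sup>2 / \<epsilon> \<le> C\<^sup>2 * \<epsilon> / 4"
  proof -
    have "0 \<le> (dist y x0 - C * \<epsilon> / 2)\<^sup>2"
      by simp
    then show ?thesis
      using assms(2) by (simp add: field_simps power2_eq_square)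
  qed
  ultimately show ?thesis
    by linarith
qed

lemma lipschitz_quadratic_penalty_dist_le:
  fixes f :: "'a::metric_space \<Rightarrow> real"
  assumes "C-lipschitz_on UNIV f" and "\<epsilon> > 0"
    and "f x0 \<le> f y - (dist y x0)\<^sup>2 / \<epsilon>"
  shows "dist y x0 \<le> C * \<epsilon>"
proof -
  have "f y \<le> f x0 + C * dist y x0"
    using lipschitz_onD[OF assms(1), of y x0] by (simp add: dist_real_def)
  moreover have "(dist y x0)\<^sup>2 \<le> \<epsilon> * (f y - f x0)"
    using assms(2,3) by (simp add: field_simps)
  ultimately have "dist y x0 * dist y x0 \<le> (C * \<epsilon>) * dist y x0"
    using assms(2) lipschitz_on_nonneg[OF assms(1)]
    by (simp add: power2_eq_square) (smt (verit) mult_left_mono mult.commute mult.left_commute)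
  then show ?thesis
    using assms(2) lipschitz_on_nonneg[OF assms(1)]
    by (cases "dist y x0 = 0") (auto simp: mult_le_cancel_right)
qed

lemma penalised_maximiser_interior:
  fixes V :: "'a::euclidean_space \<Rightarrow> real \<Rightarrow> real"
  assumes cont: "continuous_on (cball x0 1 \<times> {a..a'}) (\<lambda>z. V (fst z) (snd z))"
    and lip: "\<And>r. r \<in> {a..a'} \<Longrightarrow> C-lipschitz_on UNIV (\<lambda>y. V y r)"
    and \<epsilon>: "\<epsilon> > 0" "C * \<epsilon> < 1" and b: "b \<in> {a..a'}"
    and start: "V x0 a + C\<^sup>2 * \<epsilon> / 4 < V x0 b"
    and final: "V x0 a' + C\<^sup>2 * \<epsilon> / 4 < V x0 b"
  obtains y r where "a < r" "r < a'" "dist y x0 \<le> C * \<epsilon>"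
    "\<exists>e>0. \<forall>y' s. norm (y' - y) < e \<and> \<bar>s - r\<bar> < e \<longrightarrow>
       V y' s - (dist y' x0)\<^sup>2 / \<epsilon> \<le> V y r - (dist y x0)\<^sup>2 / \<epsilon>"
proof -
  define S where "S = cball x0 1 \<times> {a..a'}"
  define \<Phi> where "\<Phi> z = V (fst z) (snd z) - (dist (fst z) x0)\<^sup>2 / \<epsilon>" for z
  have "continuous_on S \<Phi>"
    unfolding \<Phi>_def S_def using \<epsilon>(1) by (intro continuous_intros cont) auto
  moreover have "compact S" "S \<noteq> {}"
    using b by (auto simp: S_def compact_Times)
  ultimately obtain y r where yr: "(y, r) \<in> S" and max: "\<And>w. w \<in> S \<Longrightarrow> \<Phi> w \<le> \<Phi> (y, r)"
    using continuous_attains_sup by (metis surj_pair)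
  have r: "r \<in> {a..a'}"
    using yr by (simp add: S_def)
  have "\<Phi> (x0, b) \<le> \<Phi> (y, r)"
    using max b by (simp add: S_def)
  moreover have "\<Phi> (y, r) \<le> V x0 r + C\<^sup>2 * \<epsilon> / 4"
    unfolding \<Phi>_def using lipschitz_minus_quadratic_le[OF lip[OF r] \<epsilon>(1)] by simp
  moreover have "\<Phi> (x0, b) = V x0 b"
    by (simp add: \<Phi>_def)
  ultimately have "r \<noteq> a" "r \<noteq> a'"
    using start final by auto
  then have r_inner: "a < r" "r < a'"
    using r by auto
  have "\<Phi> (x0, r) \<le> \<Phi> (y, r)"
    using max r by (simp add: S_def)
  then have d: "dist y x0 \<le> C * \<epsilon>"
    using lipschitz_quadratic_penalty_dist_le[OF lip[OF r] \<epsilon>(1)] by (simp add: \<Phi>_def)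
  define e where "e = min (1 - dist y x0) (min (r - a) (a' - r))"
  have "e > 0"
    using d \<epsilon>(2) r_inner by (simp add: e_def)
  moreover have "\<Phi> (y', s) \<le> \<Phi> (y, r)" if "norm (y' - y) < e" "\<bar>s - r\<bar> < e" for y' s
  proof (rule max)
    have "dist x0 y' \<le> dist x0 y + dist y y'"
      by (rule dist_triangle)
    then show "(y', s) \<in> S"
      using that by (auto simp: S_def e_def dist_norm norm_minus_commute)
  qed
  ultimately have "\<exists>e>0. \<forall>y' s. norm (y' - y) < e \<and> \<bar>s - r\<bar> < e \<longrightarrow> \<Phi> (y', s) \<le> \<Phi> (y, r)"
    by blast
  then show ?thesis
    using that[OF r_inner d] by (simp add: \<Phi>_def)
qed

lemma exists_time_penalty:
  fixes a b a' \<kappa> \<delta> M :: real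
  assumes "a < b" "b < a'" "\<kappa> \<ge> 0" "\<delta> > 0" "M \<ge> 0"
  obtains \<psi> \<psi>' where "\<And>r. (\<psi> has_real_derivative \<psi>' r) (at r)" "continuous_on UNIV \<psi>'"
    "\<psi> a = 0" "\<psi> b \<le> \<kappa> * (b - a) + \<delta>" "M \<le> \<psi> a'" "\<And>r. a \<le> r \<Longrightarrow> \<kappa> \<le> \<psi>' r"
proof -
  define T where "T = a' - a"
  have T: "T > 0"
    using assms(1,2) by (simp add: T_def)
  have "norm ((b - a) / T) < 1"
    using assms(1,2) by (simp add: T_def)
  then have "(\<lambda>n. M * ((b - a) / T) ^ n) \<longlonglongrightarrow> 0"
    by (intro tendsto_mult_right_zero LIMSEQ_power_zero)
  from order_tendstoD(2)[OF this assms(4)]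
  obtain N where N: "\<And>n. n \<ge> N \<Longrightarrow> M * ((b - a) / T) ^ n < \<delta>"
    by (auto simp: eventually_sequentially)
  define k where "k = Suc N"
  define \<psi> where "\<psi> r = \<kappa> * (r - a) + M * ((r - a) / T) ^ k" for r
  define \<psi>' where "\<psi>' r = \<kappa> + M * (real k * ((r - a) / T) ^ (k - 1) / T)" for r
  show thesis
  proof
    show "(\<psi> has_real_derivative \<psi>' r) (at r)" for r
      unfolding \<psi>_def \<psi>'_def using T by (auto intro!: derivative_eq_intros)
    show "continuous_on UNIV \<psi>'"
      unfolding \<psi>'_def using T by (auto intro!: continuous_intros)
    show "\<psi> a = 0"
      by (simp add: \<psi>_def k_def)
    show "\<psi> b \<le> \<kappa> * (b - a) + \<delta>"
      using N[of k] by (simp add: \<psi>_def k_def)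
    show "M \<le> \<psi> a'"
      using assms(2,3) T by (simp add: \<psi>_def T_def)
    show "\<kappa> \<le> \<psi>' r" if "a \<le> r" for r
      using that assms(5) T by (simp add: \<psi>'_def)
  qed
qed

lemma exists_penalised_local_max:
  fixes u :: "real^'n \<Rightarrow> real \<Rightarrow> real"
  assumes u_cont: "continuous_on {z. snd z \<ge> 0} (\<lambda>z. u (fst z) (snd z))"
    and u_lip: "\<And>t. t \<ge> 0 \<Longrightarrow> C-lipschitz_on UNIV (\<lambda>x. u x t)"
    and ab: "0 < a" "a < b" and "\<kappa> \<ge> 0" and \<epsilon>: "\<epsilon> > 0" "C * \<epsilon> < 1"
    and gap: "\<kappa> * (b - a) + C\<^sup>2 * \<epsilon> / 4 < u x0 b + c * b - (u x0 a + c * a)"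
  obtains \<psi> \<psi>' y r where "\<And>t. (\<psi> has_real_derivative \<psi>' t) (at t)" "continuous_on UNIV \<psi>'"
    "dist y x0 \<le> C * \<epsilon>" "r > 0" "\<kappa> \<le> \<psi>' r"
    "\<exists>e>0. \<forall>y' s. norm (y' - y) < e \<and> \<bar>s - r\<bar> < e \<longrightarrow>
       u y' s + c * s - \<psi> s - (dist y' x0)\<^sup>2 / \<epsilon> \<le> u y r + c * r - \<psi> r - (dist y x0)\<^sup>2 / \<epsilon>"
proof -
  define w where "w t = u x0 t + c * t" for t
  define g where "g = w b - w a - \<kappa> * (b - a) - C\<^sup>2 * \<epsilon> / 4"
  have "g > 0"
    using gap by (simp add: g_def w_def)
  then obtain \<psi> \<psi>' where \<psi>: "\<And>t. (\<psi> has_real_derivative \<psi>' t) (at t)" "continuous_on UNIV \<psi>'"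
    "\<psi> a = 0" "\<psi> b \<le> \<kappa> * (b - a) + g / 2" "\<bar>w (b + 1) - w a\<bar> + 1 \<le> \<psi> (b + 1)"
    "\<And>t. a \<le> t \<Longrightarrow> \<kappa> \<le> \<psi>' t"
    using exists_time_penalty[of a b "b + 1" \<kappa> "g / 2" "\<bar>w (b + 1) - w a\<bar> + 1"] ab \<open>\<kappa> \<ge> 0\<close> by auto
  define V where "V y t = u y t + c * t - \<psi> t" for y t
  have "continuous_on UNIV \<psi>"
    using \<psi>(1) by (meson DERIV_isCont continuous_at_imp_continuous_on)
  moreover have "continuous_on (cball x0 1 \<times> {a..b + 1}) (\<lambda>z. u (fst z) (snd z))"
    using ab by (auto intro: continuous_on_subset[OF u_cont])
  ultimately have V_cont: "continuous_on (cball x0 1 \<times> {a..b + 1}) (\<lambda>z. V (fst z) (snd z))"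
    unfolding V_def by (auto intro!: continuous_intros elim: continuous_on_compose2)
  have V_lip: "C-lipschitz_on UNIV (\<lambda>y. V y t)" if "t \<in> {a..b + 1}" for t
    using u_lip[of t] that ab by (auto simp: V_def lipschitz_on_def dist_real_def)
  have V_ends: "V x0 a + C\<^sup>2 * \<epsilon> / 4 < V x0 b" "V x0 (b + 1) + C\<^sup>2 * \<epsilon> / 4 < V x0 b"
  proof -
    have V_w: "V x0 t = w t - \<psi> t" for t
      by (simp add: V_def w_def)
    have "w (b + 1) - w a \<le> \<bar>w (b + 1) - w a\<bar>"
      by simp
    then show "V x0 a + C\<^sup>2 * \<epsilon> / 4 < V x0 b" "V x0 (b + 1) + C\<^sup>2 * \<epsilon> / 4 < V x0 b"
      using \<psi>(3,4,5) \<open>g > 0\<close> g_def V_w[of a] V_w[of b] V_w[of "b + 1"] by linarith+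
  qed
  have "b \<in> {a..b + 1}"
    using ab by simp
  obtain y r where r: "a < r" "r < b + 1" and y: "dist y x0 \<le> C * \<epsilon>"
    and max: "\<exists>e>0. \<forall>y' s. norm (y' - y) < e \<and> \<bar>s - r\<bar> < e \<longrightarrow>
       V y' s - (dist y' x0)\<^sup>2 / \<epsilon> \<le> V y r - (dist y x0)\<^sup>2 / \<epsilon>"
    by (rule penalised_maximiser_interior[OF V_cont V_lip \<epsilon> \<open>b \<in> {a..b + 1}\<close> V_ends])
  show thesis
  proof (rule that[OF \<psi>(1,2) y _ \<psi>(6)[OF less_imp_le[OF r(1)]]])
    show "r > 0"
      using r ab by linarith
    show "\<exists>e>0. \<forall>y' s. norm (y' - y) < e \<and> \<bar>s - r\<bar> < e \<longrightarrow>
       u y' s + c * s - \<psi> s - (dist y' x0)\<^sup>2 / \<epsilon> \<le> u y r + c * r - \<psi> r - (dist y x0)\<^sup>2 / \<epsilon>"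
      using max by (simp add: V_def)
  qed
qed

lemma test_fun_xt_time_plus_quadratic:
  fixes x0 :: "real^'n"
  assumes "\<And>r. (g has_real_derivative g' r) (at r)" and "continuous_on UNIV g'"
    and "\<epsilon> \<noteq> 0"
  shows "test_fun_xt (\<lambda>y r. g r + (y - x0) \<bullet> (y - x0) / \<epsilon>) (\<lambda>y r. g' r)
           (\<lambda>y r. (2 / \<epsilon>) *\<^sub>R (y - x0)) (\<lambda>y r. (2 / \<epsilon>) *\<^sub>R mat 1)"
  unfolding test_fun_xt_def
proof (intro conjI allI)
  fix x t
  show "((\<lambda>s. g s + (x - x0) \<bullet> (x - x0) / \<epsilon>) has_real_derivative g' t) (at t)"
    using assms(1) by (auto intro!: derivative_eq_intros)
  show "((\<lambda>y. g t + (y - x0) \<bullet> (y - x0) / \<epsilon>) has_derivative (\<lambda>h. (2 / \<epsilon>) *\<^sub>R (x - x0) \<bullet> h)) (at x)"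
    by (auto intro!: derivative_eq_intros simp: inner_commute algebra_simps add_divide_distrib)
      (use assms(3) in \<open>auto simp: field_simps\<close>)
  show "((\<lambda>y. (2 / \<epsilon>) *\<^sub>R (y - x0)) has_derivative (\<lambda>h. (2 / \<epsilon>) *\<^sub>R mat 1 *v h)) (at x)"
    by (auto intro!: derivative_eq_intros simp: scaleR_matrix_vector_assoc[symmetric])
  show "continuous_on UNIV (\<lambda>z. g' (snd z :: real))"
    by (rule continuous_on_compose2[OF assms(2) continuous_on_snd]) auto
qed (auto intro!: continuous_intros)

lemma visc_subsolution_at_penalised_max:
  fixes u :: "real^'n \<Rightarrow> real \<Rightarrow> real"
  assumes "visc_sol_evol F u0 u"
    and "\<And>t. (\<psi> has_real_derivative \<psi>' t) (at t)" and "continuous_on UNIV \<psi>'"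
    and "\<epsilon> > 0" and "r > 0"
    and "\<exists>e>0. \<forall>y' s. norm (y' - y) < e \<and> \<bar>s - r\<bar> < e \<longrightarrow>
           u y' s + c * s - \<psi> s - (dist y' x0)\<^sup>2 / \<epsilon> \<le> u y r + c * r - \<psi> r - (dist y x0)\<^sup>2 / \<epsilon>"
  shows "\<psi>' r - c + F y ((2 / \<epsilon>) *\<^sub>R (y - x0)) ((2 / \<epsilon>) *\<^sub>R mat 1) \<le> 0"
proof -
  define \<phi> where "\<phi> y r = (\<psi> r - c * r) + (y - x0) \<bullet> (y - x0) / \<epsilon>" for y r
  have "test_fun_xt \<phi> (\<lambda>y r. \<psi>' r - c) (\<lambda>y r. (2 / \<epsilon>) *\<^sub>R (y - x0)) (\<lambda>y r. (2 / \<epsilon>) *\<^sub>R mat 1)"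
    unfolding \<phi>_def using assms(2-4)
    by (intro test_fun_xt_time_plus_quadratic) (auto intro!: derivative_eq_intros continuous_intros)
  moreover have "u y' s - \<phi> y' s = u y' s + c * s - \<psi> s - (dist y' x0)\<^sup>2 / \<epsilon>" for y' s
    by (simp add: \<phi>_def dist_norm power2_norm_eq_inner)
  then have "\<exists>e>0. \<forall>y' s. norm (y' - y) < e \<and> \<bar>s - r\<bar> < e \<longrightarrow> u y' s - \<phi> y' s \<le> u y r - \<phi> y r"
    using assms(6) by presburger
  ultimately show ?thesis
    using assms(1,5) unfolding visc_sol_evol_def by blast
qed

lemma eventually_mult_less_at_right_0:
  fixes A B :: real
  assumes "B > 0"
  shows "\<forall>\<^sub>F \<epsilon> in at_right 0. A * \<epsilon> < B"
proof -
  have "((\<lambda>\<epsilon>. A * \<epsilon>) \<longlongrightarrow> 0) (at_right 0)"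
    by (intro tendsto_mult_right_zero tendsto_ident_at)
  then show ?thesis
    using order_tendstoD(2) assms by blast
qed

lemma degen_point_value_nonincreasing:
  fixes \<sigma> :: "'th \<Rightarrow> real^'n \<Rightarrow> real^'n^'n"
    and H :: "'th \<Rightarrow> real^'n \<Rightarrow> real^'n \<Rightarrow> real"
    and u :: "real^'n \<Rightarrow> real \<Rightarrow> real"
  assumes sigma_lip: "\<And>\<theta>. C-lipschitz_on UNIV (\<sigma> \<theta>)"
    and H_zero: "\<And>\<theta> x. \<bar>H \<theta> x 0\<bar> \<le> C"
    and H_lip: "\<And>R. R > 0 \<Longrightarrow> \<exists>CR>0. \<forall>\<theta> x y p q. norm p \<le> R \<longrightarrow> norm q \<le> R \<longrightarrow>
                  \<bar>H \<theta> x p - H \<theta> y q\<bar> \<le> CR * (norm (x - y) + norm (p - q))"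
    and u_sol: "visc_sol_evol (bellmanF \<sigma> H) u0 u"
    and u_lip: "\<And>t. t \<ge> 0 \<Longrightarrow> C-lipschitz_on UNIV (\<lambda>x. u x t)"
    and x0: "x0 \<in> degen_set \<sigma>" "\<And>\<theta> p. c \<le> H \<theta> x0 p"
    and ab: "0 < a" "a \<le> b"
  shows "u x0 b + c * b \<le> u x0 a + c * a"
proof (rule ccontr)
  define \<delta> where "\<delta> = u x0 b + c * b - (u x0 a + c * a)"
  assume "\<not> ?thesis"
  then have \<delta>: "\<delta> > 0"
    by (simp add: \<delta>_def)
  then have "a < b"
    using ab by (cases "a = b") (auto simp: \<delta>_def)
  have "C \<ge> 0"
    using lipschitz_on_nonneg[OF sigma_lip] .
  obtain L where L: "L > 0" "\<And>\<theta> x y p q. norm p \<le> 2 * C + 1 \<Longrightarrow> norm q \<le> 2 * C + 1 \<Longrightarrow>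
      \<bar>H \<theta> x p - H \<theta> y q\<bar> \<le> L * (norm (x - y) + norm (p - q))"
    using H_lip[of "2 * C + 1"] \<open>C \<ge> 0\<close> by auto
  define \<kappa> where "\<kappa> = \<delta> / (2 * (b - a))"
  have \<kappa>: "\<kappa> > 0" "\<kappa> * (b - a) = \<delta> / 2"
    using \<delta> \<open>a < b\<close> by (auto simp: \<kappa>_def field_simps)
  have "\<forall>\<^sub>F \<epsilon> in at_right 0. 0 < \<epsilon> \<and> C\<^sup>2 * \<epsilon> < \<delta> \<and> C * \<epsilon> < 1 \<and> (L * C + 2 * C ^ 4) * \<epsilon> < \<kappa>"
    using \<delta> \<kappa> by (intro eventually_conj eventually_at_right_less eventually_mult_less_at_right_0) auto
  then obtain \<epsilon> where \<epsilon>: "\<epsilon> > 0" "C\<^sup>2 * \<epsilon> < \<delta>" "C * \<epsilon> < 1" "(L * C + 2 * C ^ 4) * \<epsilon> < \<kappa>"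
    using eventually_happens'[OF trivial_limit_at_right_real] by blast
  have gap: "\<kappa> * (b - a) + C\<^sup>2 * \<epsilon> / 4 < u x0 b + c * b - (u x0 a + c * a)"
    using \<kappa>(2) \<epsilon>(2) \<delta> by (simp add: \<delta>_def)
  have u_cont: "continuous_on {z. snd z \<ge> 0} (\<lambda>z. u (fst z) (snd z))"
    using u_sol unfolding visc_sol_evol_def by blast
  obtain \<psi> \<psi>' y r where \<psi>: "\<And>t. (\<psi> has_real_derivative \<psi>' t) (at t)" "continuous_on UNIV \<psi>'"
    and y: "dist y x0 \<le> C * \<epsilon>" and r: "r > 0" and \<kappa>_le: "\<kappa> \<le> \<psi>' r"
    and max: "\<exists>e>0. \<forall>y' s. norm (y' - y) < e \<and> \<bar>s - r\<bar> < e \<longrightarrow>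
       u y' s + c * s - \<psi> s - (dist y' x0)\<^sup>2 / \<epsilon> \<le> u y r + c * r - \<psi> r - (dist y x0)\<^sup>2 / \<epsilon>"
    using exists_penalised_local_max[OF u_cont u_lip ab(1) \<open>a < b\<close> less_imp_le[OF \<kappa>(1)] \<epsilon>(1,3) gap]
    by metis
  have "\<psi>' r - c + bellmanF \<sigma> H y ((2 / \<epsilon>) *\<^sub>R (y - x0)) ((2 / \<epsilon>) *\<^sub>R mat 1) \<le> 0"
    by (rule visc_subsolution_at_penalised_max[OF u_sol \<psi>(1,2) \<epsilon>(1) r max])
  moreover have "c - L * C * \<epsilon> - 2 * C ^ 4 * \<epsilon> \<le> bellmanF \<sigma> H y ((2 / \<epsilon>) *\<^sub>R (y - x0)) ((2 / \<epsilon>) *\<^sub>R mat 1)"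
    by (rule bellmanF_quadratic_penalty_ge[where B = C and R = "2 * C + 1" and L = L])
      (use x0 sigma_lip H_zero L \<epsilon> y in auto)
  ultimately show False
    using \<kappa>_le \<epsilon>(4) by (simp add: algebra_simps)
qed

lemma nonincreasing_on_atLeast_0_if_pos:
  fixes f :: "real \<Rightarrow> real"
  assumes "continuous_on {0..} f" and "\<And>s t. 0 < s \<Longrightarrow> s \<le> t \<Longrightarrow> f t \<le> f s"
    and "0 \<le> s" and "s \<le> t"
  shows "f t \<le> f s"
proof (cases "0 < s \<or> t = 0")
  case True
  then show ?thesis
    using assms(2-4) by auto
next
  case False
  then have "s = 0" "0 < t"
    using assms(3,4) by auto
  have "(f \<longlongrightarrow> f 0) (at_right 0)"
    using assms(1) unfolding continuous_on_def
    by (auto intro: tendsto_within_subset[of _ _ _ "{0..}"])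
  moreover have "\<forall>\<^sub>F r in at_right 0. f t \<le> f r"
    using eventually_at_right_real[OF \<open>0 < t\<close>] by eventually_elim (use assms(2) in auto)
  ultimately show ?thesis
    using \<open>s = 0\<close> by (auto intro: tendsto_lowerbound)
qed

theorem lemma5p1:
  fixes \<sigma> :: "'th::metric_space \<Rightarrow> real^'n \<Rightarrow> real^'n^'n"
    and H :: "'th \<Rightarrow> real^'n \<Rightarrow> real^'n \<Rightarrow> real"
    and C c \<mu>0 :: real
    and u0 :: "real^'n \<Rightarrow> real"
    and u :: "real^'n \<Rightarrow> real \<Rightarrow> real"
    and K :: "(real^'n) set"
  assumes C_pos: "C > 0"
    and sigma_per: "\<And>\<theta>. periodic_fun (\<sigma> \<theta>)"
    and sigma_bd: "\<And>\<theta> x. norm (\<sigma> \<theta> x) \<le> C"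
    and sigma_lip: "\<And>\<theta>. C-lipschitz_on UNIV (\<sigma> \<theta>)"
    and H_per: "\<And>\<theta> p. periodic_fun (\<lambda>x. H \<theta> x p)"
    and H_zero: "\<And>\<theta> x. \<bar>H \<theta> x 0\<bar> \<le> C"
    and H_lip: "\<And>R. R > 0 \<Longrightarrow> \<exists>CR>0. \<forall>\<theta> x y p q. norm p \<le> R \<longrightarrow> norm q \<le> R \<longrightarrow>
                  \<bar>H \<theta> x p - H \<theta> y q\<bar> \<le> CR * (norm (x - y) + norm (p - q))"
    and u_sol: "visc_sol_evol (bellmanF \<sigma> H) u0 u"
    and u_per: "\<And>t. periodic_fun (\<lambda>x. u x t)"
    and u_lip: "\<And>t. t \<ge> 0 \<Longrightarrow> C-lipschitz_on UNIV (\<lambda>x. u x t)"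
    and v_lam: "\<And>lam. lam > 0 \<Longrightarrow> \<exists>v. periodic_fun v \<and> C-lipschitz_on UNIV v \<and>
                  visc_sol_stat (\<lambda>x r p X. lam * r + bellmanF \<sigma> H x p X) v"
    and c_erg: "\<exists>v L. periodic_fun v \<and> L-lipschitz_on UNIV v \<and>
                  visc_sol_stat (\<lambda>x r p X. bellmanF \<sigma> H x p X - c) v"
    and mu0: "\<mu>0 > 1"
    and H1: "\<And>\<theta> x p \<mu>. 1 < \<mu> \<Longrightarrow> \<mu> < \<mu>0 \<Longrightarrow> H \<theta> x (\<mu> *\<^sub>R p) - \<mu> * H \<theta> x p \<ge> (1 - \<mu>) * c"
    and K_closed: "closed K" and K_per: "periodic_set K"
    and K_sub: "K \<subseteq> degen_set \<sigma>"
    and H2: "\<And>\<theta> x p. x \<in> K \<Longrightarrow> H \<theta> x p \<ge> c"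
    and H3: "\<And>x p \<mu>. x \<in> degen_set \<sigma> \<Longrightarrow> x \<notin> K \<Longrightarrow> p \<noteq> 0 \<Longrightarrow> 1 < \<mu> \<Longrightarrow> \<mu> \<le> \<mu>0 \<Longrightarrow>
                 (INF \<theta>. H \<theta> x (\<mu> *\<^sub>R p) - \<mu> * H \<theta> x p) > (1 - \<mu>) * c"
  shows "\<forall>x0\<in>K. \<forall>s t. 0 \<le> s \<longrightarrow> s \<le> t \<longrightarrow> u x0 t + c * t \<le> u x0 s + c * s"
proof (intro ballI allI impI)
  fix x0 and s t :: real
  assume "x0 \<in> K" "0 \<le> s" "s \<le> t"
  have "continuous_on {z. snd z \<ge> 0} (\<lambda>z. u (fst z) (snd z))"
    using u_sol unfolding visc_sol_evol_def by blast
  then have "continuous_on {0..} (\<lambda>r. u (fst (x0, r)) (snd (x0, r)))"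
    by (rule continuous_on_compose2) (auto intro!: continuous_intros)
  then have "continuous_on {0..} (\<lambda>r. u x0 r + c * r)"
    by (auto intro!: continuous_intros)
  moreover have "u x0 b + c * b \<le> u x0 a + c * a" if "0 < a" "a \<le> b" for a b
    using \<open>x0 \<in> K\<close> K_sub H2
    by (intro degen_point_value_nonincreasing[OF sigma_lip H_zero H_lip u_sol u_lip _ _ that]) auto
  ultimately show "u x0 t + c * t \<le> u x0 s + c * s"
    using \<open>0 \<le> s\<close> \<open>s \<le> t\<close> by (rule nonincreasing_on_atLeast_0_if_pos)
qed

end
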